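(* The set of functions $\{\sigma_\omega\}_{\omega\in S}$ is linearly independent as a set of real-valued functions on the set of all Seifert matrices. That is, if $\omega_1,\dots,\omega_N\in S$ are distinct and $c_1,\dots,c_N\in\mathbb{R}$ satisfy $\sum_{i=1}^N c_i\,\sigma_{\omega_i}(V)=0$ for every Seifert matrix $V$, then $c_1=\dots=c_N=0$.
   Context: A Seifert matrix is a square integral matrix $V$ with $\det(V-V^T)=\pm1$ (such a matrix necessarily has even size). For a unit complex number $\omega$, the hermitianized Seifert form is $V_\omega=(1-\omega)V+(1-\bar\omega)V^T$ (a Hermitian matrix), and $\sigma_\omega(V)$ denotes its signature. $S$ denotes the set of unit complex numbers with positive imaginary part. *)

theory Defs
  imports Complex_Main "Jordan_Normal_Form.Char_Poly"
begin

definition seifert_matrix :: "int mat \<Rightarrow> bool" where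
  "seifert_matrix V \<longleftrightarrow> dim_row V = dim_col V \<and>
     (det (V - transpose_mat V) = 1 \<or> det (V - transpose_mat V) = -1)"

definition herm_seifert :: "complex \<Rightarrow> int mat \<Rightarrow> complex mat" where
  "herm_seifert w V = (1 - w) \<cdot>\<^sub>m map_mat of_int V
      + (1 - cnj w) \<cdot>\<^sub>m map_mat of_int (transpose_mat V)"

definition signature :: "complex mat \<Rightarrow> int" where
  "signature A =
     int (\<Sum>x\<in>{x. poly (char_poly A) x = 0 \<and> x \<in> \<real> \<and> Re x > 0}. order x (char_poly A))
   - int (\<Sum>x\<in>{x. poly (char_poly A) x = 0 \<and> x \<in> \<real> \<and> Re x < 0}. order x (char_poly A))"

definition sigma_w :: "complex \<Rightarrow> int mat \<Rightarrow> int" where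
  "sigma_w w V = signature (herm_seifert w V)"

definition S_set :: "complex set" where
  "S_set = {w. norm w = 1 \<and> Im w > 0}"

end

theory Submission
  imports Defs "Jordan_Normal_Form.Schur_Decomposition"
begin

text \<open>Suppose a nontrivial relation holds and let w be a point with nonzero coefficient and
  smallest real part, i.e. largest s = |1 - w|^2 = 2 - 2 Re w. For integers x, f the 4x4
  Seifert matrices seifert4 x f have traceless hermitianized forms whose determinant is
  s^2 h(s) with h = seifert4_poly x f quadratic in s. A traceless Hermitian 4x4 matrix has
  signature 0 if its determinant is positive and nonzero if it is negative. Choosing x and f so
  that h changes sign between the value of s at w and those at the other points isolates the
  term of w in the relation, so its coefficient vanishes.\<close>

section \<open>Signature and eigenvalues\<close>

lemma order_prod_linear_factors:
  "Polynomial.order x (\<Prod>a\<leftarrow>es. [:-a, 1:]) = count_list es (x :: 'a :: idom)"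
proof (induction es)
  case (Cons a es)
  have "[:-a, 1:] * (\<Prod>b\<leftarrow>es. [:-b, 1:]) \<noteq> 0"
    unfolding mult_eq_0_iff prod_list_zero_iff by auto
  from order_mult[OF this] show ?case
    using Cons.IH by (simp add: order_linear')
qed simp

lemma count_list_filter: "P x \<Longrightarrow> count_list (filter P xs) x = count_list xs x"
  by (induction xs) auto

lemma sum_order_prod_linear_factors:
  fixes es :: "'a :: idom list"
  shows "(\<Sum>x\<in>{x. poly (\<Prod>a\<leftarrow>es. [:-a, 1:]) x = 0 \<and> P x}. Polynomial.order x (\<Prod>a\<leftarrow>es. [:-a, 1:]))
       = length (filter P es)"
proof -
  have roots: "{x. poly (\<Prod>a\<leftarrow>es. [:-a, 1:]) x = 0 \<and> P x} = set (filter P es)"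
    by (auto simp: poly_prod_list_zero_iff)
  have "(\<Sum>x\<in>set (filter P es). count_list es x) = (\<Sum>x\<in>set (filter P es). count_list (filter P es) x)"
    by (intro sum.cong refl) (simp add: count_list_filter)
  then show ?thesis
    unfolding roots order_prod_linear_factors by (simp add: sum_count_set)
qed

lemma signature_eq_count_eigenvalues:
  assumes "char_poly A = (\<Prod>a\<leftarrow>es. [:-a, 1:])"
  shows "signature A = int (length (filter (\<lambda>x. x \<in> \<real> \<and> Re x > 0) es))
                     - int (length (filter (\<lambda>x. x \<in> \<real> \<and> Re x < 0) es))"
  unfolding signature_def assms sum_order_prod_linear_factors ..

definition mat_trace :: "'a :: comm_monoid_add mat \<Rightarrow> 'a" where
  "mat_trace A = (\<Sum>i<dim_row A. A $$ (i,i))"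

lemma mat_trace_mult_comm:
  fixes A :: "'a :: comm_semiring_0 mat"
  assumes "A \<in> carrier_mat n m" "B \<in> carrier_mat m n"
  shows "mat_trace (A * B) = mat_trace (B * A)"
proof -
  have "mat_trace (A * B) = (\<Sum>i<n. \<Sum>k<m. A $$ (i,k) * B $$ (k,i))"
    unfolding mat_trace_def using assms by (simp add: scalar_prod_def lessThan_atLeast0)
  also have "\<dots> = (\<Sum>k<m. \<Sum>i<n. B $$ (k,i) * A $$ (i,k))"
    by (subst sum.swap) (simp add: mult.commute)
  also have "\<dots> = mat_trace (B * A)"
    unfolding mat_trace_def using assms by (simp add: scalar_prod_def lessThan_atLeast0)
  finally show ?thesis .
qed

lemma mat_trace_similar_mat_wit:
  fixes A :: "'a :: comm_semiring_1 mat"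
  assumes "similar_mat_wit A B P Q"
  shows "mat_trace A = mat_trace B"
proof -
  obtain n where PQ: "Q * P = 1\<^sub>m n" and A: "A = P * B * Q"
    and carrier: "B \<in> carrier_mat n n" "P \<in> carrier_mat n n" "Q \<in> carrier_mat n n"
    using similar_mat_witD[OF refl assms] by blast
  have "mat_trace A = mat_trace ((P * B) * Q)"
    by (simp only: A)
  also have "\<dots> = mat_trace (Q * (P * B))"
    by (rule mat_trace_mult_comm) (use carrier in auto)
  also have "Q * (P * B) = B"
    using carrier PQ by (simp add: assoc_mult_mat[symmetric, of Q n n P n B n])
  finally show ?thesis .
qed

lemma upper_triangular_similar_eigenvalues:
  fixes A :: "'a :: conjugatable_ordered_field mat"
  assumes "A \<in> carrier_mat n n" "char_poly A = (\<Prod>a\<leftarrow>es. [:-a, 1:])"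
  obtains B P Q where "similar_mat_wit A B P Q" "upper_triangular B" "diag_mat B = es"
  using schur_decomposition[OF assms] by (metis prod_cases3)

lemma det_eq_prod_eigenvalues:
  fixes A :: "'a :: conjugatable_ordered_field mat"
  assumes A: "A \<in> carrier_mat n n" and c: "char_poly A = (\<Prod>a\<leftarrow>es. [:-a, 1:])"
  shows "det A = prod_list es"
proof -
  obtain B P Q where wit: "similar_mat_wit A B P Q" "upper_triangular B" "diag_mat B = es"
    using upper_triangular_similar_eigenvalues[OF A c] .
  then have "det A = det B"
    by (intro det_similar) (auto simp: similar_mat_def)
  also have "\<dots> = prod_list es"
    using wit similar_mat_witD2[OF A wit(1)] by (simp add: det_upper_triangular)
  finally show ?thesis .
qed

lemma mat_trace_eq_sum_eigenvalues:
  fixes A :: "'a :: conjugatable_ordered_field mat"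
  assumes A: "A \<in> carrier_mat n n" and c: "char_poly A = (\<Prod>a\<leftarrow>es. [:-a, 1:])"
  shows "mat_trace A = sum_list es"
proof -
  obtain B P Q where wit: "similar_mat_wit A B P Q" "upper_triangular B" "diag_mat B = es"
    using upper_triangular_similar_eigenvalues[OF A c] .
  then have "mat_trace A = mat_trace B"
    by (intro mat_trace_similar_mat_wit)
  also have "\<dots> = sum_list (diag_mat B)"
    unfolding mat_trace_def diag_mat_def by (simp add: sum_list_sum_nth lessThan_atLeast0)
  finally show ?thesis
    using wit by simp
qed

section \<open>Hermitian matrices\<close>

definition hermitian_mat :: "complex mat \<Rightarrow> bool" where
  "hermitian_mat H \<longleftrightarrow> (\<forall>i<dim_row H. \<forall>j<dim_row H. H $$ (i,j) = cnj (H $$ (j,i)))"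

lemma hermitian_mat_cscalar_prod:
  assumes H: "H \<in> carrier_mat n n" "hermitian_mat H" and uv: "u \<in> carrier_vec n" "v \<in> carrier_vec n"
  shows "(H *\<^sub>v u) \<bullet>c v = u \<bullet>c (H *\<^sub>v v)"
proof -
  have "(H *\<^sub>v u) \<bullet>c v = (\<Sum>i<n. \<Sum>j<n. H $$ (i,j) * u $ j * cnj (v $ i))"
    using H uv by (simp add: scalar_prod_def sum_distrib_right lessThan_atLeast0)
  also have "\<dots> = (\<Sum>j<n. \<Sum>i<n. u $ j * cnj (H $$ (j,i)) * cnj (v $ i))"
  proof (subst sum.swap, intro sum.cong refl)
    fix i j assume "i \<in> {..<n}" "j \<in> {..<n}"
    then have "H $$ (i,j) = cnj (H $$ (j,i))"
      using H unfolding hermitian_mat_def by (metis carrier_matD(1) lessThan_iff)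
    then show "H $$ (i,j) * u $ j * cnj (v $ i) = u $ j * cnj (H $$ (j,i)) * cnj (v $ i)"
      by simp
  qed
  also have "\<dots> = u \<bullet>c (H *\<^sub>v v)"
    using H uv by (simp add: scalar_prod_def sum_distrib_left lessThan_atLeast0 mult_ac)
  finally show ?thesis .
qed

lemma hermitian_mat_eigenvalue_real:
  assumes H: "H \<in> carrier_mat n n" "hermitian_mat H" and e: "eigenvalue H e"
  shows "e \<in> \<real>"
proof -
  obtain v where v: "v \<in> carrier_vec n" "v \<noteq> 0\<^sub>v n" "H *\<^sub>v v = e \<cdot>\<^sub>v v"
    using e H unfolding eigenvalue_def eigenvector_def by auto
  have "e * (v \<bullet>c v) = (H *\<^sub>v v) \<bullet>c v"
    using v by simp
  also have "\<dots> = v \<bullet>c (H *\<^sub>v v)"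
    by (rule hermitian_mat_cscalar_prod[OF H v(1) v(1)])
  also have "\<dots> = cnj e * (v \<bullet>c v)"
    using v by (simp add: conjugate_smult_vec)
  finally have "e = cnj e"
    using v by simp
  then show ?thesis
    using Reals_cnj_iff by metis
qed

lemma hermitian_mat_spectrum:
  assumes H: "H \<in> carrier_mat n n" "hermitian_mat H"
  obtains rs :: "real list" where "length rs = n"
    "signature H = int (length (filter (\<lambda>r. r > 0) rs)) - int (length (filter (\<lambda>r. r < 0) rs))"
    "det H = of_real (prod_list rs)" "mat_trace H = of_real (sum_list rs)"
proof -
  obtain es where c: "char_poly H = (\<Prod>a\<leftarrow>es. [:-a, 1:])" and n: "length es = n"
    using char_poly_factorized[OF H(1)] by blast
  have "e \<in> \<real>" if "e \<in> set es" for e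
  proof (rule hermitian_mat_eigenvalue_real[OF H])
    show "eigenvalue H e"
      using that eigenvalue_root_char_poly[OF H(1)] by (simp add: c poly_prod_list_zero_iff)
  qed
  then have es: "es = map of_real (map Re es)"
    by (simp add: map_idI)
  define rs where "rs = map Re es"
  show thesis
  proof
    show "length rs = n"
      using n by (simp add: rs_def)
    show "signature H = int (length (filter (\<lambda>r. r > 0) rs)) - int (length (filter (\<lambda>r. r < 0) rs))"
      unfolding signature_eq_count_eigenvalues[OF c] rs_def by (subst (1 2) es) (simp add: filter_map o_def)
    have "prod_list (map complex_of_real rs) = of_real (prod_list rs)"
      "sum_list (map complex_of_real rs) = of_real (sum_list rs)"
      by (induction rs) auto
    then show "det H = of_real (prod_list rs)" "mat_trace H = of_real (sum_list rs)"
      using det_eq_prod_eigenvalues[OF H(1) c] mat_trace_eq_sum_eigenvalues[OF H(1) c] es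
      unfolding rs_def by metis+
  qed
qed

lemma sign_counts_prod_neg:
  fixes a b c d :: real
  assumes "a * b * c * d < 0"
  shows "length (filter (\<lambda>r. r > 0) [a,b,c,d]) \<noteq> length (filter (\<lambda>r. r < 0) [a,b,c,d])"
  using assms
  by (cases "a > 0"; cases "b > 0"; cases "c > 0"; cases "d > 0")
     (auto simp: mult_less_0_iff zero_less_mult_iff)

lemma sign_counts_prod_pos_sum_zero:
  fixes a b c d :: real
  assumes "a * b * c * d > 0" "a + b + c + d = 0"
  shows "length (filter (\<lambda>r. r > 0) [a,b,c,d]) = length (filter (\<lambda>r. r < 0) [a,b,c,d])"
  using assms
  by (cases "a > 0"; cases "b > 0"; cases "c > 0"; cases "d > 0")
     (auto simp: mult_less_0_iff zero_less_mult_iff)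

lemma length_4_conv: "length xs = 4 \<longleftrightarrow> (\<exists>a b c d. xs = [a,b,c,d])"
  by (auto simp: numeral_eq_Suc length_Suc_conv)

lemma hermitian_mat_4_signature_nonzero:
  assumes "H \<in> carrier_mat 4 4" "hermitian_mat H" "det H = of_real D" "D < 0"
  shows "signature H \<noteq> 0"
proof -
  obtain rs where "length rs = 4"
    and sig: "signature H = int (length (filter (\<lambda>r. r > 0) rs)) - int (length (filter (\<lambda>r. r < 0) rs))"
    and det: "det H = of_real (prod_list rs)"
    using hermitian_mat_spectrum[OF assms(1,2)] .
  then obtain a b c d where rs: "rs = [a,b,c,d]"
    by (auto simp: length_4_conv)
  have "prod_list rs = D"
    using det assms(3) by (metis of_real_eq_iff)
  then have "a * b * c * d < 0"
    using assms(4) by (simp add: rs mult_ac)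
  then show ?thesis
    using sign_counts_prod_neg sig rs by simp
qed

lemma hermitian_mat_4_signature_zero:
  assumes "H \<in> carrier_mat 4 4" "hermitian_mat H" "det H = of_real D" "D > 0" "mat_trace H = 0"
  shows "signature H = 0"
proof -
  obtain rs where "length rs = 4"
    and sig: "signature H = int (length (filter (\<lambda>r. r > 0) rs)) - int (length (filter (\<lambda>r. r < 0) rs))"
    and det: "det H = of_real (prod_list rs)" and tr: "mat_trace H = of_real (sum_list rs)"
    using hermitian_mat_spectrum[OF assms(1,2)] .
  then obtain a b c d where rs: "rs = [a,b,c,d]"
    by (auto simp: length_4_conv)
  have "prod_list rs = D" "sum_list rs = 0"
    using det tr assms(3,5) by (metis of_real_eq_iff, metis of_real_eq_0_iff)
  then have "a * b * c * d > 0" "a + b + c + d = 0"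
    using assms(4) by (simp_all add: rs mult_ac add_ac)
  then show ?thesis
    using sign_counts_prod_pos_sum_zero sig rs by simp
qed

section \<open>A family of 4x4 Seifert matrices\<close>

definition mat2 :: "'a :: zero \<Rightarrow> 'a \<Rightarrow> 'a \<Rightarrow> 'a \<Rightarrow> 'a mat" where
  "mat2 a b c d = mat 2 2 (\<lambda>(i,j). if i = 0 then (if j = 0 then a else b) else (if j = 0 then c else d))"

lemma less_2_cases: "(i::nat) < 2 \<Longrightarrow> i = 0 \<or> i = 1"
  by auto

lemma less_4_cases: "(i::nat) < 4 \<Longrightarrow> i = 0 \<or> i = 1 \<or> i = 2 \<or> i = 3"
  by auto

lemma mat2_carrier [simp]: "mat2 a b c d \<in> carrier_mat 2 2"
  and dim_row_mat2 [simp]: "dim_row (mat2 a b c d) = 2"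
  and dim_col_mat2 [simp]: "dim_col (mat2 a b c d) = 2"
  by (auto simp: mat2_def)

lemma mat2_mult:
  "mat2 a b c d * mat2 a' b' c' d' = mat2 (a*a' + b*c') (a*b' + b*d') (c*a' + d*c') (c*b' + d*d')"
  by (rule eq_matI) (auto simp: mat2_def scalar_prod_def numeral_2_eq_2 dest!: less_2_cases)

lemma mat2_minus: "mat2 a b c d - mat2 a' b' c' d' = mat2 (a - a') (b - b') (c - c') (d - d')"
  by (rule eq_matI) (auto simp: mat2_def dest!: less_2_cases)

lemma det_mat2: "det (mat2 a b c d) = a * d - b * c"
proof -
  have det_1: "det M = M $$ (0,0)" if "M \<in> carrier_mat 1 1" for M :: "'a mat"
  proof -
    have "det M = M $$ (0,0) * cofactor M 0 0"
      using laplace_expansion_row[OF that, of 0] by simp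
    moreover have "mat_delete M 0 0 \<in> carrier_mat 0 0"
      using that by (auto simp: mat_delete_def)
    ultimately show ?thesis
      by (simp add: cofactor_def det_dim_zero)
  qed
  have "det (mat2 a b c d) = a * cofactor (mat2 a b c d) 0 0 + b * cofactor (mat2 a b c d) 0 1"
    using laplace_expansion_row[OF mat2_carrier, of 0] by (simp add: numeral_2_eq_2 mat2_def)
  also have "cofactor (mat2 a b c d) 0 0 = d"
    unfolding cofactor_def by (subst det_1) (auto simp: mat_delete_def mat2_def)
  also have "cofactor (mat2 a b c d) 0 1 = - c"
    unfolding cofactor_def by (subst det_1) (auto simp: mat_delete_def mat2_def)
  finally show ?thesis
    by (simp add: algebra_simps)
qed

definition seifert4 :: "int \<Rightarrow> int \<Rightarrow> int mat" where
  "seifert4 x f = four_block_mat (mat2 (-1) 1 0 (-x)) (mat2 1 0 0 1) (mat2 0 0 0 0) (mat2 0 f f (1 + x))"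

definition seifert4_poly :: "int \<Rightarrow> int \<Rightarrow> real \<Rightarrow> real" where
  "seifert4_poly x f s = 1 + of_int (f^2 - f + x^2 + x) * s - of_int (x * f^2) * s^2"

lemma seifert4_carrier: "seifert4 x f \<in> carrier_mat 4 4"
  by (simp add: seifert4_def four_block_mat_def)

lemma seifert_matrix_seifert4: "seifert_matrix (seifert4 x f)"
proof -
  have "seifert4 x f - transpose_mat (seifert4 x f) =
      four_block_mat (mat2 0 1 (-1) 0) (mat2 1 0 0 1) (mat2 (-1) 0 0 (-1)) (mat2 0 0 0 0)"
    by (rule eq_matI) (auto simp: seifert4_def four_block_mat_def mat2_def dest!: less_4_cases)
  also have "det \<dots> = 1"
    by (subst det_four_block_mat[of _ 2]) (auto simp: mat2_mult mat2_minus det_mat2)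
  finally show ?thesis
    using seifert4_carrier[of x f] unfolding seifert_matrix_def by auto
qed

lemma herm_seifert_carrier: "V \<in> carrier_mat n n \<Longrightarrow> herm_seifert w V \<in> carrier_mat n n"
  unfolding herm_seifert_def by auto

lemma hermitian_mat_herm_seifert: "V \<in> carrier_mat n n \<Longrightarrow> hermitian_mat (herm_seifert w V)"
  unfolding hermitian_mat_def herm_seifert_def by auto

lemma herm_seifert_seifert4:
  fixes w :: complex
  defines "z \<equiv> 1 - w" and "z' \<equiv> 1 - cnj w"
  shows "herm_seifert w (seifert4 x f) =
    four_block_mat (mat2 (-(z + z')) z z' (- of_int x * (z + z'))) (mat2 z 0 0 z)
      (mat2 z' 0 0 z') (mat2 0 (of_int f * (z + z')) (of_int f * (z + z')) ((1 + of_int x) * (z + z')))"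
  unfolding z_def z'_def
  by (rule eq_matI) (auto simp: herm_seifert_def seifert4_def four_block_mat_def mat2_def algebra_simps
      dest!: less_4_cases)

lemma mat_trace_herm_seifert_seifert4: "mat_trace (herm_seifert w (seifert4 x f)) = 0"
  unfolding herm_seifert_seifert4 mat_trace_def
  by (simp add: four_block_mat_def mat2_def numeral_eq_Suc algebra_simps)

lemma det_herm_seifert_seifert4:
  assumes "cmod w = 1"
  shows "det (herm_seifert w (seifert4 x f)) =
    of_real ((2 - 2 * Re w)^2 * seifert4_poly x f (2 - 2 * Re w))"
proof -
  define z z' S where "z = 1 - w" and "z' = 1 - cnj w" and "S = z + z'"
  define m n :: complex where "m = of_int (f^2 - f + x^2 + x)" and "n = of_int (x * f^2)"
  have zz': "z * z' = S"
  proof -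
    have "w * cnj w = 1"
      using assms complex_norm_square[of w] by simp
    then show ?thesis
      unfolding z_def z'_def S_def by (simp add: algebra_simps)
  qed
  have "det (herm_seifert w (seifert4 x f)) =
      det (mat2 (- S) z z' (- of_int x * S) * mat2 0 (of_int f * S) (of_int f * S) ((1 + of_int x) * S)
        - mat2 z 0 0 z * mat2 z' 0 0 z')"
    unfolding herm_seifert_seifert4 z_def[symmetric] z'_def[symmetric] S_def[symmetric]
    by (rule det_four_block_mat[of _ 2]) (auto simp: mat2_mult algebra_simps)
  \<comment> \<open>written so that the correction terms vanish, as z * z' = z + z' = S\<close>
  also have "\<dots> = S^2 * (1 + m * S - n * S^2) + (z * z' - S) * (m * S^2 + z * z' + S)
      - z * z' * of_int f * S * (z + z' - S)"
    unfolding mat2_mult mat2_minus det_mat2 m_def n_def of_int_add of_int_diff of_int_mult of_int_power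
    by (simp add: algebra_simps power2_eq_square)
  also have "\<dots> = S^2 * (1 + m * S - n * S^2)"
    by (simp add: zz' S_def)
  also have "S = of_real (2 - 2 * Re w)"
    by (simp add: S_def z_def z'_def complex_eq_iff)
  finally show ?thesis
    by (simp add: seifert4_poly_def m_def n_def)
qed

lemma sigma_w_seifert4_nonzero:
  assumes "cmod w = 1" "Re w < 1" "seifert4_poly x f (2 - 2 * Re w) < 0"
  shows "sigma_w w (seifert4 x f) \<noteq> 0"
  unfolding sigma_w_def
  by (rule hermitian_mat_4_signature_nonzero[OF herm_seifert_carrier[OF seifert4_carrier]
        hermitian_mat_herm_seifert[OF seifert4_carrier] det_herm_seifert_seifert4[OF assms(1)]])
    (use assms(2,3) in \<open>simp add: mult_pos_neg\<close>)

lemma sigma_w_seifert4_zero: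
  assumes "cmod w = 1" "Re w < 1" "seifert4_poly x f (2 - 2 * Re w) > 0"
  shows "sigma_w w (seifert4 x f) = 0"
  unfolding sigma_w_def
  by (rule hermitian_mat_4_signature_zero[OF herm_seifert_carrier[OF seifert4_carrier]
        hermitian_mat_herm_seifert[OF seifert4_carrier] det_herm_seifert_seifert4[OF assms(1)]
        _ mat_trace_herm_seifert_seifert4])
    (use assms(2,3) in simp)

lemma seifert4_poly_pos:
  assumes "0 \<le> s" "of_int f^2 * s \<le> of_int x"
  shows "seifert4_poly x f s > 0"
proof -
  have "f \<le> f^2"
    by (cases "f \<le> 0") (auto simp: power2_eq_square intro: order_trans[OF _ zero_le_square])
  then have "0 \<le> (of_int (f^2 - f) :: real)"
    by simp
  moreover have "0 \<le> of_int x * s * (of_int x - of_int f^2 * s)" "0 \<le> of_int x * s"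
    using assms by (auto intro!: mult_nonneg_nonneg order_trans[OF _ assms(2)])
  ultimately have "0 < 1 + of_int (f^2 - f) * s + of_int x * s + of_int x * s * (of_int x - of_int f^2 * s)"
    using assms(1) by (smt (verit) mult_nonneg_nonneg)
  then show ?thesis
    by (simp add: seifert4_poly_def power2_eq_square algebra_simps)
qed

lemma seifert4_poly_neg:
  assumes "0 < sb" "sb \<le> sa" "0 \<le> f" "of_int f^2 * sb \<le> of_int x"
    and "of_int x + 2 + 1 / sb \<le> of_int f^2 * sa" "1 < of_int x * sa"
  shows "seifert4_poly x f sa < 0"
proof -
  define X F where "X = (of_int x :: real)" and "F = (of_int f^2 :: real)"
  have Xsa: "0 < X * sa"
    using assms(6) by (simp add: X_def)
  have "seifert4_poly x f sa = 1 + (F + X) * sa - of_int f * sa - X * sa * (F * sa - X)"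
    by (simp add: seifert4_poly_def X_def F_def power2_eq_square algebra_simps)
  also have "\<dots> \<le> 1 + (F + X) * sa - X * sa * (2 + 1 / sb)"
  proof -
    have "X * sa * (2 + 1 / sb) \<le> X * sa * (F * sa - X)"
      using assms(5) Xsa by (intro mult_left_mono) (auto simp: X_def F_def)
    moreover have "0 \<le> of_int f * sa"
      using assms(1-3) by simp
    ultimately show ?thesis
      by linarith
  qed
  also have "\<dots> \<le> 1 + (X / sb + X) * sa - X * sa * (2 + 1 / sb)"
    using assms(1,2,4) by (simp add: X_def F_def pos_le_divide_eq mult_right_mono)
  also have "\<dots> = 1 - X * sa"
    using assms(1) by (simp add: field_simps)
  finally show ?thesis
    using assms(6) by (simp add: X_def)
qed

lemma seifert4_poly_sign_change:
  assumes "0 < sb" "sb < sa"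
  obtains x f where "seifert4_poly x f sa < 0" "\<And>s. 0 \<le> s \<Longrightarrow> s \<le> sb \<Longrightarrow> seifert4_poly x f s > 0"
proof -
  obtain k :: nat where k: "max 1 (max ((3 + 1 / sb) / (sa - sb)) (1 / (sb * sa))) < k"
    using reals_Archimedean2 by blast
  define f :: int where "f = int k"
  define F where "F = (of_int f^2 :: real)"
  \<comment> \<open>x / f^2 lies just above sb, and f is large enough that it stays below sa\<close>
  define x where "x = \<lceil>F * sb\<rceil>"
  have kF: "real k \<le> F"
    using k by (simp add: F_def f_def power2_eq_square)
  have "3 + 1 / sb < real k * (sa - sb)" "1 < real k * (sb * sa)"
    using k assms by (simp_all add: pos_divide_less_eq)
  moreover have "real k * (sa - sb) \<le> F * (sa - sb)" "real k * (sb * sa) \<le> F * (sb * sa)"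
    using kF assms by (simp_all add: mult_right_mono)
  ultimately have F: "3 + 1 / sb < F * (sa - sb)" "1 < F * (sb * sa)"
    by linarith+
  have x: "F * sb \<le> of_int x" "of_int x < F * sb + 1"
    unfolding x_def by linarith+
  show thesis
  proof
    show "seifert4_poly x f sa < 0"
    proof (rule seifert4_poly_neg)
      show "of_int x + 2 + 1 / sb \<le> of_int f^2 * sa"
        using x F by (simp add: F_def algebra_simps)
      have "F * sb * sa \<le> of_int x * sa"
        using x assms by (simp add: mult_right_mono)
      then show "1 < of_int x * sa"
        using F by (simp add: mult_ac)
    qed (use assms x in \<open>simp_all add: F_def f_def\<close>)
    fix s assume "0 \<le> s" "s \<le> sb"
    then have "F * s \<le> of_int x"
      using x by (smt (verit) F_def mult_left_mono zero_le_power2)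
    then show "seifert4_poly x f s > 0"
      using \<open>0 \<le> s\<close> by (intro seifert4_poly_pos) (simp_all add: F_def)
  qed
qed

section \<open>Separating the signature functions\<close>

lemma S_set_Re_less_1:
  assumes "w \<in> S_set"
  shows "Re w < 1"
proof -
  have "(Re w)^2 + (Im w)^2 = 1" "Im w > 0"
    using assms unfolding S_set_def by (auto simp: cmod_power2[symmetric])
  then have "(Re w)^2 < 1"
    by (smt (verit) zero_less_power2)
  then show ?thesis
    by (simp add: abs_square_less_1)
qed

lemma inj_on_Re_S_set: "inj_on Re S_set"
proof
  fix u w assume u: "u \<in> S_set" and w: "w \<in> S_set" and Re: "Re u = Re w"
  have "(Re u)^2 + (Im u)^2 = (Re w)^2 + (Im w)^2"
    using u w unfolding S_set_def by (simp add: cmod_power2[symmetric])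
  then have "Im u = Im w"
    using u w Re unfolding S_set_def by (simp add: power2_eq_iff)
  then show "u = w"
    using Re by (simp add: complex_eq_iff)
qed

lemma separating_seifert_matrix:
  assumes w: "w \<in> S_set" and W: "finite W" "W \<subseteq> S_set" "\<forall>u\<in>W. Re w < Re u"
  obtains V where "seifert_matrix V" "sigma_w w V \<noteq> 0" "\<forall>u\<in>W. sigma_w u V = 0"
proof -
  define sa where "sa = 2 - 2 * Re w"
  define sb where "sb = Max (insert (sa / 2) ((\<lambda>u. 2 - 2 * Re u) ` W))"
  have sa: "0 < sa"
    using S_set_Re_less_1[OF w] by (simp add: sa_def)
  have "sa / 2 \<le> sb"
    unfolding sb_def using W(1) by (intro Max_ge) auto
  moreover have "sb < sa"
    unfolding sb_def using W(1,3) sa by (subst Max_less_iff) (auto simp: sa_def)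
  ultimately have sb: "0 < sb" "sb < sa"
    using sa by simp_all
  obtain x f where neg: "seifert4_poly x f sa < 0"
    and pos: "\<And>s. 0 \<le> s \<Longrightarrow> s \<le> sb \<Longrightarrow> seifert4_poly x f s > 0"
    using seifert4_poly_sign_change[OF sb] by blast
  show thesis
  proof
    show "seifert_matrix (seifert4 x f)"
      by (rule seifert_matrix_seifert4)
    show "sigma_w w (seifert4 x f) \<noteq> 0"
      using w S_set_Re_less_1[OF w] neg unfolding S_set_def sa_def by (intro sigma_w_seifert4_nonzero) auto
    show "\<forall>u\<in>W. sigma_w u (seifert4 x f) = 0"
    proof
      fix u assume "u \<in> W"
      then have u: "u \<in> S_set" "2 - 2 * Re u \<le> sb"
        using W(1,2) by (auto simp: sb_def)
      then have "seifert4_poly x f (2 - 2 * Re u) > 0"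
        using S_set_Re_less_1[OF u(1)] by (intro pos) simp_all
      then show "sigma_w u (seifert4 x f) = 0"
        using u S_set_Re_less_1[OF u(1)] unfolding S_set_def by (intro sigma_w_seifert4_zero) auto
    qed
  qed
qed

lemma triangular_family_coefficients_zero:
  fixes r :: "'i \<Rightarrow> 'r :: linorder" and g :: "'i \<Rightarrow> 'v \<Rightarrow> real"
  assumes I: "finite I" "inj_on r I"
    and separating: "\<And>i. i \<in> I \<Longrightarrow> \<exists>v\<in>X. g i v \<noteq> 0 \<and> (\<forall>j\<in>I. r i < r j \<longrightarrow> g j v = 0)"
    and vanishing: "\<And>v. v \<in> X \<Longrightarrow> (\<Sum>i\<in>I. c i * g i v) = 0"
  shows "\<forall>i\<in>I. c i = 0"
proof (rule ccontr)
  define J where "J = {i\<in>I. c i \<noteq> 0}"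
  assume "\<not> (\<forall>i\<in>I. c i = 0)"
  then have "J \<noteq> {}" "finite J"
    using I(1) by (auto simp: J_def)
  then obtain i0 where i0: "i0 \<in> J" "\<And>j. j \<in> J \<Longrightarrow> r i0 \<le> r j"
    using arg_min_if_finite[of J r] by (metis not_le)
  obtain v where v: "v \<in> X" "g i0 v \<noteq> 0" "\<forall>j\<in>I. r i0 < r j \<longrightarrow> g j v = 0"
    using separating i0(1) by (auto simp: J_def)
  have others: "c j * g j v = 0" if "j \<in> I - {i0}" for j
  proof (cases "c j = 0")
    case False
    then have "r i0 \<le> r j" "r i0 \<noteq> r j"
      using that i0 inj_onD[OF I(2), of i0 j] by (auto simp: J_def)
    then show ?thesis
      using that v(3) by simp
  qed simp
  have "(\<Sum>i\<in>I. c i * g i v) = c i0 * g i0 v + (\<Sum>i\<in>I - {i0}. c i * g i v)"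
    using I(1) i0(1) unfolding J_def by (intro sum.remove) auto
  also have "(\<Sum>i\<in>I - {i0}. c i * g i v) = 0"
    using others by (intro sum.neutral) blast
  finally have "c i0 * g i0 v = 0"
    using vanishing[OF v(1)] by simp
  then show False
    using v(2) i0(1) by (simp add: J_def)
qed

theorem theorem1:
  fixes N :: nat and w :: "nat \<Rightarrow> complex" and c :: "nat \<Rightarrow> real"
  assumes "\<forall>i\<in>{1..N}. w i \<in> S_set"
    and "inj_on w {1..N}"
    and "\<forall>V. seifert_matrix V \<longrightarrow> (\<Sum>i=1..N. c i * real_of_int (sigma_w (w i) V)) = 0"
  shows "\<forall>i\<in>{1..N}. c i = 0"
proof (rule triangular_family_coefficients_zero[where r = "\<lambda>i. Re (w i)" and X = "Collect seifert_matrix"])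
  have "inj_on Re (w ` {1..N})"
    using assms(1) by (blast intro: inj_on_subset[OF inj_on_Re_S_set])
  then show "inj_on (\<lambda>i. Re (w i)) {1..N}"
    using comp_inj_on[OF assms(2)] by (simp add: o_def)
  fix i assume i: "i \<in> {1..N}"
  let ?W = "w ` {j\<in>{1..N}. Re (w i) < Re (w j)}"
  obtain V where V: "seifert_matrix V" "sigma_w (w i) V \<noteq> 0" "\<forall>u\<in>?W. sigma_w u V = 0"
    by (rule separating_seifert_matrix[of "w i" ?W]) (use i assms(1) in auto)
  then show "\<exists>V\<in>Collect seifert_matrix. real_of_int (sigma_w (w i) V) \<noteq> 0 \<and>
      (\<forall>j\<in>{1..N}. Re (w i) < Re (w j) \<longrightarrow> real_of_int (sigma_w (w j) V) = 0)"
    by (intro bexI[of _ V]) auto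
qed (use assms(3) in simp_all)

end
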